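(* Let $F:\mathbb{S}^{m_1}\times\mathbb{H}^{m_2}\to\mathbb{H}^{n+1}\subset\mathbb{L}^{n+2}$, $n=m_1+m_2$, be the immersion of a cylinder in the hyperbolic space, with unit normal $N$, with $m_1$ principal curvatures equal to $\kappa_1>1$ and $m_2$ principal curvatures equal to $\kappa_2$, such that $\kappa_1\kappa_2=1$. Then the solution to the mean curvature flow with initial condition $F$ is given by $$\widehat F^t(x)=\cosh(\xi(t))F(x)+\sinh(\xi(t))N(x),$$ where $$\cosh(2\xi(t))=\frac{a\ell(t)-2\sqrt{q(t)}}{a^2-4},\qquad \sinh(2\xi(t))=\frac{2\ell(t)-a\sqrt{q(t)}}{a^2-4},$$ with $q(t)=\ell^2(t)-a^2+4$, $\ell(t)=(a-b)e^{-2nt}+b$, $a=\kappa_1+\kappa_2$ and $b=-\frac{m_1-m_2}{n}(\kappa_1-\kappa_2)$. $\widehat F^t$ is defined for all $t\in(-\infty,t^* )$, where $t^*=\frac{1}{2n}\ln\frac{m_1\kappa_1^2+m_2}{m_1(\kappa_1^2-1)}$, and it collapses into an $m_2$-dimensional focal submanifold at $t^*$.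
   Context: $\mathbb{H}^{n+1}$ is the hyperboloid model of hyperbolic space in the Lorentzian space $\mathbb{L}^{n+2}$. Second fundamental form $h(v,w)=-\langle dN(v),dF(w)\rangle$, principal curvatures are its eigenvalues, mean curvature $H=\sum_i\kappa_i$. A family $\widehat F:M\times I\to\mathbb{H}^{n+1}$, $0\in I$, solves the mean curvature flow with initial condition $F$ if $\partial_t\widehat F=\widehat H\widehat N$ and $\widehat F(\cdot,0)=F$, where $\widehat N^t$ is a unit normal of $\widehat F^t$ and $\widehat H^t$ the corresponding mean curvature. *)

theory Defs
  imports "HOL-Analysis.Analysis"
begin

text \<open>Lorentzian space L^{n+2} is modelled as real \<times> 'v with DIM('v) = n+1;
  the first component is the time coordinate.\<close>

definition lor :: "real \<times> 'v::euclidean_space \<Rightarrow> real \<times> 'v \<Rightarrow> real" where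
  "lor x y = - fst x * fst y + snd x \<bullet> snd y"

definition hyperbolic_space :: "(real \<times> 'v::euclidean_space) set" where
  "hyperbolic_space = {x. lor x x = -1 \<and> fst x > 0}"

text \<open>F : U \<rightarrow> H^{n+1} is an immersion (U an open parameter domain, a chart of M).\<close>
definition immersion_H :: "'m::euclidean_space set \<Rightarrow> ('m \<Rightarrow> real \<times> 'v::euclidean_space) \<Rightarrow> bool" where
  "immersion_H U F \<longleftrightarrow> open U \<and>
     (\<forall>p\<in>U. F differentiable (at p) \<and> F p \<in> hyperbolic_space \<and>
            inj (frechet_derivative F (at p)))"

definition unit_normal :: "'m::euclidean_space set \<Rightarrow> ('m \<Rightarrow> real \<times> 'v::euclidean_space)
    \<Rightarrow> ('m \<Rightarrow> real \<times> 'v) \<Rightarrow> bool" where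
  "unit_normal U F N \<longleftrightarrow>
     (\<forall>p\<in>U. N differentiable (at p) \<and> lor (N p) (N p) = 1 \<and> lor (N p) (F p) = 0 \<and>
            (\<forall>v. lor (N p) (frechet_derivative F (at p) v) = 0))"

definition sff :: "('m::euclidean_space \<Rightarrow> real \<times> 'v::euclidean_space) \<Rightarrow> ('m \<Rightarrow> real \<times> 'v)
    \<Rightarrow> 'm \<Rightarrow> 'm \<Rightarrow> 'm \<Rightarrow> real" where
  "sff F N p v w = - lor (frechet_derivative N (at p) v) (frechet_derivative F (at p) w)"

definition ind_metric :: "('m::euclidean_space \<Rightarrow> real \<times> 'v::euclidean_space) \<Rightarrow> 'm \<Rightarrow> 'm \<Rightarrow> 'm \<Rightarrow> real" where
  "ind_metric F p v w = lor (frechet_derivative F (at p) v) (frechet_derivative F (at p) w)"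

text \<open>Eigenspace of h (with respect to the induced metric) for the value k;
  k is a principal curvature iff this space is nonzero, its multiplicity is the dimension.\<close>
definition princ_eigenspace :: "('m::euclidean_space \<Rightarrow> real \<times> 'v::euclidean_space) \<Rightarrow> ('m \<Rightarrow> real \<times> 'v)
    \<Rightarrow> 'm \<Rightarrow> real \<Rightarrow> 'm set" where
  "princ_eigenspace F N p k = {v. \<forall>w. sff F N p v w = k * ind_metric F p v w}"

definition mean_curvature :: "('m::euclidean_space \<Rightarrow> real \<times> 'v::euclidean_space) \<Rightarrow> ('m \<Rightarrow> real \<times> 'v)
    \<Rightarrow> 'm \<Rightarrow> real" where
  "mean_curvature F N p =
     (\<Sum>k\<in>{k. princ_eigenspace F N p k \<noteq> {0}}. real (dim (princ_eigenspace F N p k)) * k)"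

definition mcf_solution :: "'m::euclidean_space set \<Rightarrow> real set \<Rightarrow> ('m \<Rightarrow> real \<Rightarrow> real \<times> 'v::euclidean_space)
    \<Rightarrow> ('m \<Rightarrow> real \<times> 'v) \<Rightarrow> bool" where
  "mcf_solution U I Fh F \<longleftrightarrow> 0 \<in> I \<and> (\<forall>x\<in>U. Fh x 0 = F x) \<and>
     (\<exists>Nh. \<forall>t\<in>I. immersion_H U (\<lambda>x. Fh x t) \<and> unit_normal U (\<lambda>x. Fh x t) (\<lambda>x. Nh x t) \<and>
        (\<forall>x\<in>U. ((\<lambda>s. Fh x s) has_vector_derivative
                   (mean_curvature (\<lambda>y. Fh y t) (\<lambda>y. Nh y t) x *\<^sub>R Nh x t)) (at t within I)))"

end

theory Submission
  imports Defs
begin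

text \<open>The parallel hypersurfaces cosh x F + sinh x N of F have the same principal directions as F,
  with principal curvatures (k cosh x - sinh x) / (cosh x - k sinh x) for k = \<kappa>1, \<kappa>2, so the mean
  curvature flow starting at F reduces to an ordinary differential equation for the distance \<xi>(t).
  For the stated \<xi> one has exp (2 \<xi>) = (l - sqrt q) / (a - 2), and the two principal curvatures
  become (l \<plusminus> (\<kappa>1 - \<kappa>2)) / sqrt q; with these the differential equation reduces to the linear
  equation l' = -2n (l - b). At t* one has l = \<kappa>1 - \<kappa>2 and q = 0, hence cosh \<xi> = \<kappa>1 sinh \<xi>:
  the m1 directions with curvature \<kappa>1 collapse and the image is m2-dimensional.\<close>

lemma lor_sym: "lor x y = lor y x"
  by (simp add: lor_def inner_commute)

lemma lor_add_left: "lor (x + y) z = lor x z + lor y z"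
  by (simp add: lor_def inner_add_left algebra_simps)

lemma lor_add_right: "lor x (y + z) = lor x y + lor x z"
  by (simp add: lor_def inner_add_right algebra_simps)

lemma lor_scaleR_left: "lor (c *\<^sub>R x) y = c * lor x y"
  by (simp add: lor_def algebra_simps)

lemma lor_scaleR_right: "lor x (c *\<^sub>R y) = c * lor x y"
  by (simp add: lor_def algebra_simps)

lemma lor_diff_right: "lor x (y - z) = lor x y - lor x z"
  by (simp add: lor_def inner_diff_right algebra_simps)

lemma lor_zero_right: "lor x 0 = 0"
  by (simp add: lor_def)

lemmas lor_bilinear = lor_add_left lor_add_right lor_scaleR_left lor_scaleR_right

lemma has_derivative_lor:
  assumes "(f has_derivative f') (at p)" and "(g has_derivative g') (at p)"
  shows "((\<lambda>y. lor (f y) (g y)) has_derivative (\<lambda>v. lor (f' v) (g p) + lor (f p) (g' v))) (at p)"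
proof -
  have "((\<lambda>y. - (fst (f y) * fst (g y)) + snd (f y) \<bullet> snd (g y)) has_derivative
      (\<lambda>v. - (fst (f p) * fst (g' v) + fst (f' v) * fst (g p))
           + (snd (f p) \<bullet> snd (g' v) + snd (f' v) \<bullet> snd (g p)))) (at p)"
    by (intro derivative_intros has_derivative_fst has_derivative_snd assms)
  then show ?thesis
    by (simp add: lor_def algebra_simps)
qed

lemma has_derivative_eq_0_if_constant_on:
  assumes "(f has_derivative f') (at p)" and "open S" and "p \<in> S" and "\<And>y. y \<in> S \<Longrightarrow> f y = c"
  shows "f' v = 0"
proof -
  have "(f has_derivative (\<lambda>v. 0)) (at p)"
    by (rule has_derivative_transform_within_open[OF has_derivative_const assms(2,3)])
       (use assms(4) in auto)
  then show ?thesis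
    using has_derivative_unique assms(1) by metis
qed

text \<open>By the reversed Cauchy-Schwarz inequality, points on opposite sheets of the hyperboloid have
  positive Lorentz product.\<close>
lemma hyperboloid_same_sheet:
  fixes f x :: "real \<times> 'v::euclidean_space"
  assumes "fst f > 0" and "lor f f = -1" and "lor x x = -1" and "lor f x < 0"
  shows "fst x > 0"
proof (rule ccontr)
  assume "\<not> fst x > 0"
  then have "fst f * fst x \<le> 0"
    using assms(1) by (simp add: mult_nonneg_nonpos)
  moreover have "snd f \<bullet> snd x < fst f * fst x"
    using assms(4) by (simp add: lor_def)
  ultimately have "(fst f * fst x)\<^sup>2 < (snd f \<bullet> snd x)\<^sup>2"
    using power_strict_mono[of "- (fst f * fst x)" "- (snd f \<bullet> snd x)" 2] by simp
  also have "\<dots> \<le> (snd f \<bullet> snd f) * (snd x \<bullet> snd x)"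
    by (rule Cauchy_Schwarz_ineq)
  also have "\<dots> = ((fst f)\<^sup>2 - 1) * ((fst x)\<^sup>2 - 1)"
  proof -
    have "snd y \<bullet> snd y = (fst y)\<^sup>2 - 1" if "lor y y = -1" for y :: "real \<times> 'v"
      using that by (simp add: lor_def power2_eq_square)
    then show ?thesis
      using assms(2,3) by simp
  qed
  finally have "(fst f)\<^sup>2 + (fst x)\<^sup>2 < 1"
    by (simp add: algebra_simps power_mult_distrib)
  moreover have "(fst x)\<^sup>2 \<ge> 1"
    using assms(3) inner_ge_zero[of "snd x"] unfolding lor_def power2_eq_square by linarith
  ultimately show False
    using assms(1) zero_less_power[of "fst f" 2] by linarith
qed

locale hyperbolic_hypersurface =
  fixes U :: "'m::euclidean_space set" and F N :: "'m \<Rightarrow> real \<times> 'v::euclidean_space"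
  assumes immersion: "immersion_H U F" and normal: "unit_normal U F N"
    and codim_one: "DIM('v) = DIM('m) + 1"
begin

lemma open_U: "open U"
  using immersion by (simp add: immersion_H_def)

context
  fixes p assumes p: "p \<in> U"
begin

abbreviation "dF \<equiv> frechet_derivative F (at p)"
abbreviation "dN \<equiv> frechet_derivative N (at p)"

lemma has_derivative_F: "(F has_derivative dF) (at p)"
  using immersion p by (simp add: immersion_H_def frechet_derivative_works)

lemma has_derivative_N: "(N has_derivative dN) (at p)"
  using normal p by (simp add: unit_normal_def frechet_derivative_works)

lemma linear_dF: "linear dF"
  using has_derivative_linear[OF has_derivative_F] .

lemma linear_dN: "linear dN"
  using has_derivative_linear[OF has_derivative_N] .

lemma inj_dF: "inj dF"
  using immersion p by (simp add: immersion_H_def)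

lemma dF_eq_0_iff: "dF v = 0 \<longleftrightarrow> v = 0"
  using inj_dF linear_0[OF linear_dF] by (metis injD)

lemma lor_F_F: "lor (F p) (F p) = -1"
  using immersion p by (simp add: immersion_H_def hyperbolic_space_def)

lemma fst_F_pos: "fst (F p) > 0"
  using immersion p by (simp add: immersion_H_def hyperbolic_space_def)

lemma lor_N_N: "lor (N p) (N p) = 1"
  using normal p by (simp add: unit_normal_def)

lemma lor_N_F: "lor (N p) (F p) = 0"
  using normal p by (simp add: unit_normal_def)

lemma lor_N_dF: "lor (N p) (dF v) = 0"
  using normal p by (simp add: unit_normal_def)

lemma lor_F_dF: "lor (F p) (dF v) = 0"
proof -
  have "lor (dF v) (F p) + lor (F p) (dF v) = 0"
    by (rule has_derivative_eq_0_if_constant_on[OF has_derivative_lor[OF has_derivative_F has_derivative_F] open_U p])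
       (use immersion in \<open>auto simp: immersion_H_def hyperbolic_space_def\<close>)
  then show ?thesis
    by (simp add: lor_sym)
qed

lemma lor_N_dN: "lor (N p) (dN v) = 0"
proof -
  have "lor (dN v) (N p) + lor (N p) (dN v) = 0"
    by (rule has_derivative_eq_0_if_constant_on[OF has_derivative_lor[OF has_derivative_N has_derivative_N] open_U p])
       (use normal in \<open>auto simp: unit_normal_def\<close>)
  then show ?thesis
    by (simp add: lor_sym)
qed

lemma lor_F_dN: "lor (F p) (dN v) = 0"
proof -
  have "lor (dN v) (F p) + lor (N p) (dF v) = 0"
    by (rule has_derivative_eq_0_if_constant_on[OF has_derivative_lor[OF has_derivative_N has_derivative_F] open_U p])
       (use normal in \<open>auto simp: unit_normal_def\<close>)
  then show ?thesis
    by (simp add: lor_sym lor_N_dF)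
qed

lemma span_frame: "span (insert (F p) (insert (N p) (range dF))) = UNIV"
proof -
  have span_range: "span (range dF) = range dF"
    using linear_subspace_image[OF linear_dF subspace_UNIV] by simp
  have "N p \<notin> span (range dF)"
  proof
    assume "N p \<in> span (range dF)"
    then obtain w where "N p = dF w"
      using span_range by auto
    then show False
      using lor_N_N lor_N_dF[of w] by simp
  qed
  moreover have "F p \<notin> span (insert (N p) (range dF))"
  proof
    assume "F p \<in> span (insert (N p) (range dF))"
    then obtain c w where w: "F p - c *\<^sub>R N p = dF w"
      using span_range by (auto simp: span_insert)
    have "lor (F p) (F p - c *\<^sub>R N p) = -1"
      using lor_F_F lor_N_F by (simp add: lor_diff_right lor_scaleR_right lor_sym)
    then show False
      using w lor_F_dF[of w] by simp
  qed
  moreover have "dim (range dF) = DIM('m)"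
    using dim_image_eq[OF linear_dF, of UNIV] inj_dF by (simp add: inj_on_def dim_UNIV)
  ultimately have "dim (insert (F p) (insert (N p) (range dF))) = DIM(real \<times> 'v)"
    using codim_one by (simp add: dim_insert)
  then show ?thesis
    using dim_eq_full by blast
qed

lemma lor_frame_nondegenerate:
  assumes "lor z (F p) = 0" and "lor z (N p) = 0" and "\<And>w. lor z (dF w) = 0"
  shows "z = 0"
proof -
  have lor_z: "lor z y = 0" for y
  proof -
    have "y \<in> span (insert (F p) (insert (N p) (range dF)))"
      using span_frame by simp
    then show ?thesis
    proof (induction rule: span_induct)
      case base
      show ?case
        by (simp add: subspace_def lor_zero_right lor_add_right lor_scaleR_right)
    qed (use assms in auto)
  qed
  have "(fst z)\<^sup>2 + snd z \<bullet> snd z = 0"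
    using lor_z[of "(- fst z, snd z)"] by (simp add: lor_def power2_eq_square)
  then show ?thesis
    by (simp add: prod_eq_iff add_nonneg_eq_0_iff)
qed

text \<open>Weingarten equation: since N, F and the tangent vectors span the ambient space, the
  eigenvector condition on the second fundamental form determines dN v completely.\<close>
lemma princ_eigenspace_iff: "v \<in> princ_eigenspace F N p k \<longleftrightarrow> dN v = - k *\<^sub>R dF v"
proof
  assume "v \<in> princ_eigenspace F N p k"
  then have eigen: "- lor (dN v) (dF w) = k * lor (dF v) (dF w)" for w
    by (simp add: princ_eigenspace_def sff_def ind_metric_def)
  have "lor (dN v + k *\<^sub>R dF v) (dF w) = 0" for w
    using eigen[of w] by (simp add: lor_add_left lor_scaleR_left)
  moreover have "lor (dN v + k *\<^sub>R dF v) (F p) = 0" "lor (dN v + k *\<^sub>R dF v) (N p) = 0"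
    using lor_F_dN lor_F_dF lor_N_dN lor_N_dF
    by (simp_all add: lor_add_left lor_scaleR_left lor_sym[of "dN v"] lor_sym[of "dF v"])
  ultimately have "dN v + k *\<^sub>R dF v = 0"
    by (intro lor_frame_nondegenerate)
  then show "dN v = - k *\<^sub>R dF v"
    by (simp add: eq_neg_iff_add_eq_0)
qed (simp add: princ_eigenspace_def sff_def ind_metric_def lor_def algebra_simps)

lemma subspace_princ_eigenspace: "subspace (princ_eigenspace F N p k)"
proof -
  have "linear (\<lambda>v. dN v + k *\<^sub>R dF v)"
    using has_derivative_add[OF has_derivative_N has_derivative_scaleR_right[OF has_derivative_F]]
    by (rule has_derivative_linear)
  moreover have "princ_eigenspace F N p k = {v. dN v + k *\<^sub>R dF v = 0}"
    by (auto simp: princ_eigenspace_iff eq_neg_iff_add_eq_0)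
  ultimately show ?thesis
    using linear_subspace_kernel by metis
qed

lemma princ_eigenspace_add_eq_0:
  assumes "k1 \<noteq> k2" and "v1 \<in> princ_eigenspace F N p k1" and "v2 \<in> princ_eigenspace F N p k2"
    and "v1 + v2 = 0"
  shows "v1 = 0 \<and> v2 = 0"
proof -
  have "v1 = - v2"
    using assms(4) by (simp add: eq_neg_iff_add_eq_0)
  then have "v1 \<in> princ_eigenspace F N p k2"
    using subspace_neg[OF subspace_princ_eigenspace assms(3)] by simp
  then have "(k2 - k1) *\<^sub>R dF v1 = 0"
    using assms(2) by (simp add: princ_eigenspace_iff algebra_simps)
  then show ?thesis
    using assms(1,4) dF_eq_0_iff by simp
qed

lemma mem_princ_eigenspace_add_iff:
  assumes "k1 \<noteq> k2" and v1: "v1 \<in> princ_eigenspace F N p k1" and v2: "v2 \<in> princ_eigenspace F N p k2"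
  shows "v1 + v2 \<in> princ_eigenspace F N p k \<longleftrightarrow> (k = k1 \<or> v1 = 0) \<and> (k = k2 \<or> v2 = 0)"
proof -
  have "dN (v1 + v2) + k *\<^sub>R dF (v1 + v2) = dF ((k - k1) *\<^sub>R v1 + (k - k2) *\<^sub>R v2)"
    using v1 v2 unfolding princ_eigenspace_iff
    by (simp add: linear_add[OF linear_dN] linear_add[OF linear_dF] linear_scale[OF linear_dF] linear_diff[OF linear_dF]
        scaleR_diff_left scaleR_add_right)
  then have "v1 + v2 \<in> princ_eigenspace F N p k \<longleftrightarrow> (k - k1) *\<^sub>R v1 + (k - k2) *\<^sub>R v2 = 0"
    unfolding princ_eigenspace_iff eq_neg_iff_add_eq_0 scaleR_minus_left by (simp add: dF_eq_0_iff)
  also have "\<dots> \<longleftrightarrow> (k - k1) *\<^sub>R v1 = 0 \<and> (k - k2) *\<^sub>R v2 = 0"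
  proof
    assume "(k - k1) *\<^sub>R v1 + (k - k2) *\<^sub>R v2 = 0"
    then show "(k - k1) *\<^sub>R v1 = 0 \<and> (k - k2) *\<^sub>R v2 = 0"
      by (rule princ_eigenspace_add_eq_0[OF assms(1) subspace_scale[OF subspace_princ_eigenspace v1]
            subspace_scale[OF subspace_princ_eigenspace v2]])
  qed auto
  finally show ?thesis
    by simp
qed

lemma princ_eigenspace_inter:
  assumes "k1 \<noteq> k2"
  shows "princ_eigenspace F N p k1 \<inter> princ_eigenspace F N p k2 = {0}"
proof -
  have "v = 0" if "v \<in> princ_eigenspace F N p k1" "v \<in> princ_eigenspace F N p k2" for v
    using princ_eigenspace_add_eq_0[OF assms that(1) subspace_neg[OF subspace_princ_eigenspace that(2)]]
    by simp
  then show ?thesis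
    using subspace_0[OF subspace_princ_eigenspace] by blast
qed

lemma dim_princ_eigenspace_add:
  assumes "k1 \<noteq> k2"
  shows "dim (princ_eigenspace F N p k1) + dim (princ_eigenspace F N p k2) =
    dim {x + y |x y. x \<in> princ_eigenspace F N p k1 \<and> y \<in> princ_eigenspace F N p k2}"
  using dim_sums_Int[OF subspace_princ_eigenspace subspace_princ_eigenspace, of k1 k2]
  by (simp add: princ_eigenspace_inter[OF assms])

lemma dim_princ_eigenspace_add_le:
  assumes "k1 \<noteq> k2"
  shows "dim (princ_eigenspace F N p k1) + dim (princ_eigenspace F N p k2) \<le> DIM('m)"
  unfolding dim_princ_eigenspace_add[OF assms] by (rule dim_subset_UNIV)

lemma princ_eigenspace_decompose:
  assumes "k1 \<noteq> k2"
    and "dim (princ_eigenspace F N p k1) + dim (princ_eigenspace F N p k2) = DIM('m)"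
  obtains v1 v2 where "v1 \<in> princ_eigenspace F N p k1" and "v2 \<in> princ_eigenspace F N p k2"
    and "v = v1 + v2"
proof -
  let ?S = "{x + y |x y. x \<in> princ_eigenspace F N p k1 \<and> y \<in> princ_eigenspace F N p k2}"
  have "dim ?S = DIM('m)"
    using dim_princ_eigenspace_add[OF assms(1)] assms(2) by simp
  then have "span ?S = UNIV"
    using dim_eq_full by blast
  moreover have "span ?S = ?S"
    using subspace_sums[OF subspace_princ_eigenspace subspace_princ_eigenspace] by simp
  ultimately have "v \<in> ?S"
    by simp
  then show ?thesis
    using that by blast
qed

lemma mean_curvature_two_principal:
  assumes "k1 \<noteq> k2"
    and "dim (princ_eigenspace F N p k1) + dim (princ_eigenspace F N p k2) = DIM('m)"
    and "dim (princ_eigenspace F N p k1) > 0" and "dim (princ_eigenspace F N p k2) > 0"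
  shows "mean_curvature F N p =
    real (dim (princ_eigenspace F N p k1)) * k1 + real (dim (princ_eigenspace F N p k2)) * k2"
proof -
  have other: "princ_eigenspace F N p k = {0}" if "k \<noteq> k1" "k \<noteq> k2" for k
  proof -
    have "v = 0" if v: "v \<in> princ_eigenspace F N p k" for v
    proof -
      obtain v1 v2 where v12: "v1 \<in> princ_eigenspace F N p k1" "v2 \<in> princ_eigenspace F N p k2"
        and "v = v1 + v2"
        using princ_eigenspace_decompose[OF assms(1,2)] .
      then have "v1 = 0 \<and> v2 = 0"
        using mem_princ_eigenspace_add_iff[OF assms(1) v12, of k] v \<open>k \<noteq> k1\<close> \<open>k \<noteq> k2\<close> by simp
      then show ?thesis
        using \<open>v = v1 + v2\<close> by simp
    qed
    then show ?thesis
      using subspace_0[OF subspace_princ_eigenspace[of k]] by auto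
  qed
  have nonzero: "princ_eigenspace F N p k \<noteq> {0}" if "dim (princ_eigenspace F N p k) > 0" for k
    using that by (metis dim_eq_0 less_irrefl order_refl)
  have "{k. princ_eigenspace F N p k \<noteq> {0}} = {k1, k2}"
  proof (rule set_eqI)
    show "k \<in> {k. princ_eigenspace F N p k \<noteq> {0}} \<longleftrightarrow> k \<in> {k1, k2}" for k
      using other[of k] nonzero[OF assms(3)] nonzero[OF assms(4)] by auto
  qed
  then show ?thesis
    using assms(1) by (simp add: mean_curvature_def)
qed

end


abbreviation parallel where
  "parallel x \<equiv> \<lambda>y. cosh x *\<^sub>R F y + sinh x *\<^sub>R N y"

abbreviation parallel_normal where
  "parallel_normal x \<equiv> \<lambda>y. sinh x *\<^sub>R F y + cosh x *\<^sub>R N y"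

context
  fixes p assumes p: "p \<in> U"
begin

lemma has_derivative_parallel:
  "(parallel x has_derivative (\<lambda>v. cosh x *\<^sub>R dF p v + sinh x *\<^sub>R dN p v)) (at p)"
  by (intro has_derivative_add has_derivative_scaleR_right has_derivative_F[OF p] has_derivative_N[OF p])

lemma has_derivative_parallel_normal:
  "(parallel_normal x has_derivative (\<lambda>v. sinh x *\<^sub>R dF p v + cosh x *\<^sub>R dN p v)) (at p)"
  by (intro has_derivative_add has_derivative_scaleR_right has_derivative_F[OF p] has_derivative_N[OF p])

lemma frechet_derivative_parallel:
  "frechet_derivative (parallel x) (at p) = (\<lambda>v. cosh x *\<^sub>R dF p v + sinh x *\<^sub>R dN p v)"
  by (rule frechet_derivative_at[OF has_derivative_parallel, symmetric])

lemma frechet_derivative_parallel_normal: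
  "frechet_derivative (parallel_normal x) (at p) = (\<lambda>v. sinh x *\<^sub>R dF p v + cosh x *\<^sub>R dN p v)"
  by (rule frechet_derivative_at[OF has_derivative_parallel_normal, symmetric])

lemma lor_frame_combination:
  "lor (a *\<^sub>R F p + b *\<^sub>R N p) (c *\<^sub>R F p + d *\<^sub>R N p) = b * d - a * c"
  using lor_F_F[OF p] lor_N_N[OF p] lor_N_F[OF p]
  by (simp add: lor_bilinear lor_sym[of "F p" "N p"] algebra_simps)

lemma parallel_in_hyperbolic_space: "parallel x p \<in> hyperbolic_space"
proof -
  have on_hyperboloid: "lor (parallel x p) (parallel x p) = -1"
    using lor_frame_combination hyperbolic_pythagoras[of x] by (simp add: power2_eq_square)
  have "lor (1 *\<^sub>R F p + 0 *\<^sub>R N p) (parallel x p) = - cosh x"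
    by (rule lor_frame_combination[THEN trans]) simp
  then have "lor (F p) (parallel x p) < 0"
    by simp
  then show ?thesis
    using hyperboloid_same_sheet[OF fst_F_pos[OF p] lor_F_F[OF p] on_hyperboloid] on_hyperboloid
    by (simp add: hyperbolic_space_def)
qed

lemma linear_frechet_derivative_parallel: "linear (frechet_derivative (parallel x) (at p))"
  unfolding frechet_derivative_parallel by (rule has_derivative_linear[OF has_derivative_parallel])

lemma frechet_derivative_parallel_eigenvector:
  "v \<in> princ_eigenspace F N p k \<Longrightarrow>
    frechet_derivative (parallel x) (at p) v = (cosh x - k * sinh x) *\<^sub>R dF p v"
  by (simp add: frechet_derivative_parallel princ_eigenspace_iff[OF p] scaleR_diff_left)

lemma frechet_derivative_parallel_normal_eigenvector:
  "v \<in> princ_eigenspace F N p k \<Longrightarrow>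
    frechet_derivative (parallel_normal x) (at p) v = (sinh x - k * cosh x) *\<^sub>R dF p v"
  by (simp add: frechet_derivative_parallel_normal princ_eigenspace_iff[OF p] scaleR_diff_left)

end

lemma unit_normal_parallel: "unit_normal U (parallel x) (parallel_normal x)"
  unfolding unit_normal_def
proof (intro ballI conjI allI)
  fix p assume p: "p \<in> U"
  show "parallel_normal x differentiable at p"
    using has_derivative_parallel_normal[OF p] by (auto simp: differentiable_def)
  show "lor (parallel_normal x p) (parallel_normal x p) = 1"
    using lor_frame_combination[OF p] hyperbolic_pythagoras[of x] by (simp add: power2_eq_square)
  show "lor (parallel_normal x p) (parallel x p) = 0"
    using lor_frame_combination[OF p] by simp
  show "lor (parallel_normal x p) (frechet_derivative (parallel x) (at p) v) = 0" for v
    using lor_F_dF[OF p] lor_F_dN[OF p] lor_N_dF[OF p] lor_N_dN[OF p]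
    by (simp add: frechet_derivative_parallel[OF p] lor_bilinear)
qed

end

definition parallel_curvature :: "real \<Rightarrow> real \<Rightarrow> real" where
  "parallel_curvature k x = (k * cosh x - sinh x) / (cosh x - k * sinh x)"

lemma cosh_sub_mult_sinh_eq_0_unique:
  fixes x k1 k2 :: real
  assumes "cosh x - k1 * sinh x = 0" and "cosh x - k2 * sinh x = 0"
  shows "k1 = k2"
proof -
  have "(k1 - k2) * sinh x = 0"
    using assms by (simp add: algebra_simps)
  moreover have "sinh x \<noteq> 0"
    using assms(1) cosh_real_pos[of x] by auto
  ultimately show ?thesis
    by simp
qed

lemma parallel_curvature_neq:
  fixes x k1 k2 :: real
  assumes "k1 \<noteq> k2" and "cosh x - k1 * sinh x \<noteq> 0" and "cosh x - k2 * sinh x \<noteq> 0"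
  shows "parallel_curvature k1 x \<noteq> parallel_curvature k2 x"
proof
  assume "parallel_curvature k1 x = parallel_curvature k2 x"
  then have "(k1 * cosh x - sinh x) * (cosh x - k2 * sinh x) - (k2 * cosh x - sinh x) * (cosh x - k1 * sinh x) = 0"
    using assms(2,3) by (simp add: parallel_curvature_def field_simps)
  moreover have "(k1 * cosh x - sinh x) * (cosh x - k2 * sinh x) - (k2 * cosh x - sinh x) * (cosh x - k1 * sinh x)
      = (k1 - k2) * ((cosh x)\<^sup>2 - (sinh x)\<^sup>2)"
    by (simp add: algebra_simps power2_eq_square)
  ultimately show False
    using assms(1) by (simp add: hyperbolic_pythagoras)
qed

lemma has_vector_derivative_cosh_sinh_combination:
  fixes A B :: "'a::real_normed_vector"
  assumes "(\<xi> has_real_derivative d) (at t within I)"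
  shows "((\<lambda>s. cosh (\<xi> s) *\<^sub>R A + sinh (\<xi> s) *\<^sub>R B) has_vector_derivative
      d *\<^sub>R (sinh (\<xi> t) *\<^sub>R A + cosh (\<xi> t) *\<^sub>R B)) (at t within I)"
proof -
  have "((\<lambda>s. cosh (\<xi> s) *\<^sub>R A + sinh (\<xi> s) *\<^sub>R B) has_vector_derivative
      (cosh (\<xi> t) *\<^sub>R 0 + (sinh (\<xi> t) * d) *\<^sub>R A) + (sinh (\<xi> t) *\<^sub>R 0 + (cosh (\<xi> t) * d) *\<^sub>R B))
      (at t within I)"
    by (intro has_vector_derivative_add has_vector_derivative_scaleR has_vector_derivative_const
        has_field_derivative_cosh[OF assms] has_field_derivative_sinh[OF assms])
  then show ?thesis
    by (simp add: scaleR_add_right mult.commute)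
qed

locale two_curvature_hypersurface = hyperbolic_hypersurface U F N
  for U :: "'m::euclidean_space set" and F N :: "'m \<Rightarrow> real \<times> 'v::euclidean_space" +
  fixes k1 k2 :: real and m1 m2 :: nat
  assumes distinct_curvatures: "k1 \<noteq> k2"
    and multiplicities: "\<And>p. p \<in> U \<Longrightarrow>
      dim (princ_eigenspace F N p k1) = m1 \<and> dim (princ_eigenspace F N p k2) = m2"
    and multiplicities_sum: "m1 + m2 = DIM('m)"
    and multiplicities_pos: "m1 > 0" "m2 > 0"
begin

lemma decompose_tangent:
  assumes "p \<in> U"
  obtains v1 v2 where "v1 \<in> princ_eigenspace F N p k1" and "v2 \<in> princ_eigenspace F N p k2"
    and "v = v1 + v2"
  using princ_eigenspace_decompose[OF assms distinct_curvatures] multiplicities[OF assms]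
    multiplicities_sum by metis

lemma immersion_parallel:
  assumes "cosh x - k1 * sinh x \<noteq> 0" and "cosh x - k2 * sinh x \<noteq> 0"
  shows "immersion_H U (parallel x)"
  unfolding immersion_H_def
proof (intro conjI ballI open_U)
  fix p assume p: "p \<in> U"
  show "parallel x differentiable at p"
    using has_derivative_parallel[OF p] by (auto simp: differentiable_def)
  show "parallel x p \<in> hyperbolic_space"
    using parallel_in_hyperbolic_space[OF p] .
  note linear = linear_frechet_derivative_parallel[OF p]
  show "inj (frechet_derivative (parallel x) (at p))"
    unfolding linear_inj_iff_eq_0[OF linear]
  proof (intro allI impI)
    fix v assume v: "frechet_derivative (parallel x) (at p) v = 0"
    obtain v1 v2 where v12: "v1 \<in> princ_eigenspace F N p k1" "v2 \<in> princ_eigenspace F N p k2"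
      and "v = v1 + v2"
      using decompose_tangent[OF p] .
    then have "dF p ((cosh x - k1 * sinh x) *\<^sub>R v1 + (cosh x - k2 * sinh x) *\<^sub>R v2) = 0"
      using v frechet_derivative_parallel_eigenvector[OF p] linear_add[OF linear]
      by (simp add: linear_add[OF linear_dF[OF p]] linear_scale[OF linear_dF[OF p]])
    then have "(cosh x - k1 * sinh x) *\<^sub>R v1 = 0 \<and> (cosh x - k2 * sinh x) *\<^sub>R v2 = 0"
      by (intro princ_eigenspace_add_eq_0[OF p distinct_curvatures]
          subspace_scale[OF subspace_princ_eigenspace[OF p] v12(1)]
          subspace_scale[OF subspace_princ_eigenspace[OF p] v12(2)]) (simp add: dF_eq_0_iff[OF p])
    then show "v = 0"
      using assms \<open>v = v1 + v2\<close> by simp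
  qed
qed

lemma hyperbolic_hypersurface_parallel:
  assumes "cosh x - k1 * sinh x \<noteq> 0" and "cosh x - k2 * sinh x \<noteq> 0"
  shows "hyperbolic_hypersurface U (parallel x) (parallel_normal x)"
  using immersion_parallel[OF assms] unit_normal_parallel codim_one by unfold_locales

lemma princ_eigenspace_subset_parallel:
  assumes "cosh x - k1 * sinh x \<noteq> 0" and "cosh x - k2 * sinh x \<noteq> 0"
    and "cosh x - k * sinh x \<noteq> 0" and p: "p \<in> U"
  shows "princ_eigenspace F N p k \<subseteq>
    princ_eigenspace (parallel x) (parallel_normal x) p (parallel_curvature k x)"
proof
  interpret P: hyperbolic_hypersurface U "parallel x" "parallel_normal x"
    using hyperbolic_hypersurface_parallel[OF assms(1,2)] .
  fix v assume "v \<in> princ_eigenspace F N p k"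
  then show "v \<in> princ_eigenspace (parallel x) (parallel_normal x) p (parallel_curvature k x)"
    using assms(3) unfolding P.princ_eigenspace_iff[OF p]
    by (simp add: frechet_derivative_parallel_eigenvector[OF p] frechet_derivative_parallel_normal_eigenvector[OF p]
        parallel_curvature_def)
qed

lemma mean_curvature_parallel:
  assumes c1: "cosh x - k1 * sinh x \<noteq> 0" and c2: "cosh x - k2 * sinh x \<noteq> 0" and p: "p \<in> U"
  shows "mean_curvature (parallel x) (parallel_normal x) p =
    real m1 * parallel_curvature k1 x + real m2 * parallel_curvature k2 x"
proof -
  interpret P: hyperbolic_hypersurface U "parallel x" "parallel_normal x"
    using hyperbolic_hypersurface_parallel[OF c1 c2] .
  let ?E = "princ_eigenspace (parallel x) (parallel_normal x) p"
  have distinct: "parallel_curvature k1 x \<noteq> parallel_curvature k2 x"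
    using parallel_curvature_neq[OF distinct_curvatures c1 c2] .
  have "m1 \<le> dim (?E (parallel_curvature k1 x))" "m2 \<le> dim (?E (parallel_curvature k2 x))"
    using dim_subset[OF princ_eigenspace_subset_parallel[OF c1 c2 c1 p]]
      dim_subset[OF princ_eigenspace_subset_parallel[OF c1 c2 c2 p]] multiplicities[OF p] by simp_all
  moreover have "dim (?E (parallel_curvature k1 x)) + dim (?E (parallel_curvature k2 x)) \<le> m1 + m2"
    using P.dim_princ_eigenspace_add_le[OF p distinct] multiplicities_sum by simp
  ultimately have "dim (?E (parallel_curvature k1 x)) = m1" "dim (?E (parallel_curvature k2 x)) = m2"
    by linarith+
  moreover have "mean_curvature (parallel x) (parallel_normal x) p =
      real (dim (?E (parallel_curvature k1 x))) * parallel_curvature k1 x +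
      real (dim (?E (parallel_curvature k2 x))) * parallel_curvature k2 x"
    by (rule P.mean_curvature_two_principal[OF p distinct])
       (use calculation multiplicities_sum multiplicities_pos in simp_all)
  ultimately show ?thesis
    by simp
qed

lemma dim_range_frechet_derivative_parallel_focal:
  assumes c1: "cosh x - k1 * sinh x = 0" and p: "p \<in> U"
  shows "dim (range (frechet_derivative (parallel x) (at p))) = m2"
proof -
  have c2: "cosh x - k2 * sinh x \<noteq> 0"
    using cosh_sub_mult_sinh_eq_0_unique[OF c1] distinct_curvatures by blast
  let ?E2 = "princ_eigenspace F N p k2"
  have "range (frechet_derivative (parallel x) (at p)) = dF p ` ?E2"
  proof (intro set_eqI iffI)
    fix z assume "z \<in> range (frechet_derivative (parallel x) (at p))"
    then obtain v where z: "z = frechet_derivative (parallel x) (at p) v"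
      by auto
    obtain v1 v2 where v12: "v1 \<in> princ_eigenspace F N p k1" "v2 \<in> ?E2" and "v = v1 + v2"
      using decompose_tangent[OF p] .
    then have "z = dF p ((cosh x - k2 * sinh x) *\<^sub>R v2)"
      using z c1 frechet_derivative_parallel_eigenvector[OF p] linear_scale[OF linear_dF[OF p]]
        linear_add[OF linear_frechet_derivative_parallel[OF p]] by simp
    then show "z \<in> dF p ` ?E2"
      using subspace_scale[OF subspace_princ_eigenspace[OF p] v12(2)] by blast
  next
    fix z assume "z \<in> dF p ` ?E2"
    then obtain v where v: "v \<in> ?E2" "z = dF p v"
      by auto
    have "frechet_derivative (parallel x) (at p) ((1 / (cosh x - k2 * sinh x)) *\<^sub>R v) = z"
      using frechet_derivative_parallel_eigenvector[OF p subspace_scale[OF subspace_princ_eigenspace[OF p] v(1)]]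
        linear_scale[OF linear_dF[OF p]] c2 v(2) by simp
    then show "z \<in> range (frechet_derivative (parallel x) (at p))"
      by (rule range_eqI[OF sym])
  qed
  moreover have "inj_on (dF p) (span ?E2)"
    by (rule inj_on_subset[OF inj_dF[OF p] subset_UNIV])
  ultimately show ?thesis
    by (simp add: dim_image_eq[OF linear_dF[OF p]] multiplicities[OF p])
qed

lemma mcf_solution_parallel_flow:
  assumes "0 \<in> I" and "\<xi> 0 = 0"
    and nonfocal: "\<And>t. t \<in> I \<Longrightarrow> cosh (\<xi> t) - k1 * sinh (\<xi> t) \<noteq> 0 \<and> cosh (\<xi> t) - k2 * sinh (\<xi> t) \<noteq> 0"
    and ode: "\<And>t. t \<in> I \<Longrightarrow> (\<xi> has_real_derivative
      real m1 * parallel_curvature k1 (\<xi> t) + real m2 * parallel_curvature k2 (\<xi> t)) (at t within I)"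
  shows "mcf_solution U I (\<lambda>x t. cosh (\<xi> t) *\<^sub>R F x + sinh (\<xi> t) *\<^sub>R N x) F"
proof -
  have "immersion_H U (parallel (\<xi> t)) \<and> unit_normal U (parallel (\<xi> t)) (parallel_normal (\<xi> t)) \<and>
      (\<forall>x\<in>U. ((\<lambda>s. cosh (\<xi> s) *\<^sub>R F x + sinh (\<xi> s) *\<^sub>R N x) has_vector_derivative
        mean_curvature (parallel (\<xi> t)) (parallel_normal (\<xi> t)) x *\<^sub>R parallel_normal (\<xi> t) x)
        (at t within I))"
    if t: "t \<in> I" for t
  proof (intro conjI ballI)
    have c1: "cosh (\<xi> t) - k1 * sinh (\<xi> t) \<noteq> 0" and c2: "cosh (\<xi> t) - k2 * sinh (\<xi> t) \<noteq> 0"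
      using nonfocal[OF t] by simp_all
    show "immersion_H U (parallel (\<xi> t))"
      by (rule immersion_parallel[OF c1 c2])
    show "unit_normal U (parallel (\<xi> t)) (parallel_normal (\<xi> t))"
      by (rule unit_normal_parallel)
    show "((\<lambda>s. cosh (\<xi> s) *\<^sub>R F x + sinh (\<xi> s) *\<^sub>R N x) has_vector_derivative
        mean_curvature (parallel (\<xi> t)) (parallel_normal (\<xi> t)) x *\<^sub>R parallel_normal (\<xi> t) x)
        (at t within I)" if x: "x \<in> U" for x
      using has_vector_derivative_cosh_sinh_combination[OF ode[OF t]]
      by (simp add: mean_curvature_parallel[OF c1 c2 x])
  qed
  then show ?thesis
    unfolding mcf_solution_def using assms(1,2)
    by (intro conjI exI[of _ "\<lambda>x t. parallel_normal (\<xi> t) x"]) auto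
qed

end

lemma cosh_sinh_combination_exp:
  fixes a b y :: real
  shows "a * cosh y - b * sinh y = ((a - b) * exp (2 * y) + (a + b)) / (2 * exp y)"
  by (simp add: cosh_field_def sinh_field_def exp_minus field_simps mult_exp_exp)

lemma cosh_sub_mult_sinh_wronskian:
  fixes k y :: real
  shows "cosh y * (cosh y - k * sinh y) + sinh y * (k * cosh y - sinh y) = 1"
  using hyperbolic_pythagoras[of y] by (simp add: algebra_simps power2_eq_square)

lemma exp_form_curvature_identity:
  fixes k D l s X :: real
  assumes "k \<noteq> 1" and "X * (k - 1)\<^sup>2 = k * (l - s)" and "k * D = k\<^sup>2 - 1" and "s\<^sup>2 = l\<^sup>2 - D\<^sup>2"
  shows "((1 - k) * X + (1 + k)) * (l + D) = ((k - 1) * X + (k + 1)) * s"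
proof -
  have "(k - 1) * (((1 - k) * X + (1 + k)) * (l + D) - ((k - 1) * X + (k + 1)) * s)
      = - (X * (k - 1)\<^sup>2) * (l + D + s) + (k\<^sup>2 - 1) * (l + D - s)"
    by (simp add: algebra_simps power2_eq_square)
  also have "\<dots> = k * (D\<^sup>2 - l\<^sup>2 + s\<^sup>2)"
    unfolding assms(2) assms(3)[symmetric] by (simp add: algebra_simps power2_eq_square)
  also have "\<dots> = 0"
    using assms(4) by simp
  finally show ?thesis
    using assms(1) by simp
qed

locale cylinder_flow_data =
  fixes m1 m2 n :: nat and k1 k2 a b tstar :: real and l q :: "real \<Rightarrow> real"
  assumes n_eq: "n = m1 + m2" and m1_pos: "m1 \<ge> 1" and m2_pos: "m2 \<ge> 1"
    and k1_gt_1: "k1 > 1" and k1_k2: "k1 * k2 = 1"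
    and a_eq: "a = k1 + k2"
    and b_eq: "b = - (real m1 - real m2) / real n * (k1 - k2)"
    and l_eq: "l = (\<lambda>t. (a - b) * exp (- 2 * real n * t) + b)"
    and q_eq: "q = (\<lambda>t. (l t)\<^sup>2 - a\<^sup>2 + 4)"
    and tstar_eq: "tstar = 1 / (2 * real n) * ln ((real m1 * k1\<^sup>2 + real m2) / (real m1 * (k1\<^sup>2 - 1)))"
begin

lemma k2_eq: "k2 = 1 / k1"
  using k1_k2 k1_gt_1 by (simp add: field_simps)

lemma k2_less_k1: "k2 < k1"
  using k1_gt_1 less_1_mult[OF k1_gt_1 k1_gt_1] unfolding k2_eq by (simp add: divide_less_eq)

lemma n_pos: "real n > 0"
  using n_eq m1_pos by simp

lemma a_gt_2: "a > 2"
proof -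
  have "k1 * (a - 2) = (k1 - 1)\<^sup>2"
    unfolding a_eq using k1_k2 by (simp add: algebra_simps power2_eq_square)
  then have "k1 * (a - 2) > 0"
    using k1_gt_1 by simp
  then show ?thesis
    using k1_gt_1 by (simp add: zero_less_mult_iff)
qed

lemma a_sq_minus_4: "a\<^sup>2 - 4 = (k1 - k2)\<^sup>2"
  unfolding a_eq using k1_k2 by (simp add: algebra_simps power2_eq_square)

lemma q_eq_diff_squares: "q t = (l t)\<^sup>2 - (k1 - k2)\<^sup>2"
  unfolding q_eq using a_sq_minus_4 by simp

lemma n_mult_b: "real n * b = - (real m1 - real m2) * (k1 - k2)"
  unfolding b_eq using n_pos by simp

lemma n_mult_a_sub_b: "real n * (a - b) = 2 * (real m1 * k1 + real m2 * k2)"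
proof -
  have "real n * (a - b) = real n * a - real n * b"
    by (simp add: algebra_simps)
  also have "\<dots> = 2 * (real m1 * k1 + real m2 * k2)"
    unfolding n_mult_b by (simp add: a_eq n_eq algebra_simps)
  finally show ?thesis .
qed

lemma a_sub_b_pos: "a - b > 0"
proof -
  have "real m1 * k1 + real m2 * k2 > 0"
    using m1_pos m2_pos k1_gt_1 k1_k2 k2_eq by (simp add: add_pos_pos)
  then have "real n * (a - b) > 0"
    unfolding n_mult_a_sub_b by simp
  then show ?thesis
    using n_pos by (simp add: zero_less_mult_iff)
qed

lemma l_strict_antimono: "s < t \<Longrightarrow> l t < l s"
  unfolding l_eq using a_sub_b_pos n_pos by simp

lemma l_0: "l 0 = a"
  unfolding l_eq by simp

lemma l_tstar: "l tstar = k1 - k2"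
proof -
  define M where "M = real m1 * k1\<^sup>2 + real m2"
  define P where "P = real m1 * (k1\<^sup>2 - 1)"
  have k1_sq: "k1\<^sup>2 > 1"
    using k1_gt_1 by (simp add: one_less_power)
  have M_pos: "M > 0"
    unfolding M_def using m1_pos k1_sq by (intro add_pos_nonneg mult_pos_pos) auto
  have P_pos: "P > 0"
    unfolding P_def using m1_pos k1_sq by simp
  have "- 2 * real n * tstar = - ln (M / P)"
    unfolding tstar_eq M_def P_def using n_pos by simp
  then have E: "exp (- 2 * real n * tstar) = P / M"
    using M_pos P_pos by (simp add: exp_minus)
  have "real n * k1 * (a - b) = 2 * M"
    unfolding M_def using n_mult_a_sub_b k1_k2 by (simp add: algebra_simps power2_eq_square)
  have "real n * k1 * ((a - b) * exp (- 2 * real n * tstar)) = (real n * k1 * (a - b)) * (P / M)"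
    unfolding E by (simp only: mult.assoc)
  also have "\<dots> = 2 * P"
    unfolding \<open>real n * k1 * (a - b) = 2 * M\<close> using M_pos by simp
  finally have "k1 * (real n * ((a - b) * exp (- 2 * real n * tstar))) = 2 * real m1 * (k1 * k1 - k1 * k2)"
    unfolding P_def k1_k2 by (simp add: algebra_simps power2_eq_square)
  then have "k1 * (real n * ((a - b) * exp (- 2 * real n * tstar))) = k1 * (2 * real m1 * (k1 - k2))"
    by (simp add: algebra_simps)
  then have decay: "real n * ((a - b) * exp (- 2 * real n * tstar)) = 2 * real m1 * (k1 - k2)"
    using k1_gt_1 by simp
  have "real n * l tstar = real n * ((a - b) * exp (- 2 * real n * tstar)) + real n * b"
    unfolding l_eq by (simp add: distrib_left)
  also have "\<dots> = real n * (k1 - k2)"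
    unfolding decay n_mult_b by (simp add: n_eq algebra_simps)
  finally show ?thesis
    using n_pos by simp
qed

lemma tstar_pos: "tstar > 0"
proof (rule ccontr)
  assume "\<not> tstar > 0"
  then have "l 0 \<le> l tstar"
    using l_strict_antimono by (cases "tstar = 0") (simp_all add: less_eq_real_def)
  then show False
    using l_0 l_tstar a_eq k1_k2 k1_gt_1 k2_eq by simp
qed

lemma l_ge: "t \<le> tstar \<Longrightarrow> k1 - k2 \<le> l t"
  using l_strict_antimono[of t tstar] l_tstar by (cases "t = tstar") simp_all

lemma l_gt: "t < tstar \<Longrightarrow> k1 - k2 < l t"
  using l_strict_antimono[of t tstar] l_tstar by simp

lemma q_nonneg: "t \<le> tstar \<Longrightarrow> q t \<ge> 0"
  unfolding q_eq_diff_squares using l_ge k2_less_k1 by (simp add: power_mono)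

lemma q_pos: "t < tstar \<Longrightarrow> q t > 0"
  unfolding q_eq_diff_squares using l_gt k2_less_k1 by (simp add: power_strict_mono)

lemma q_tstar: "q tstar = 0"
  unfolding q_eq_diff_squares l_tstar by simp

lemma sqrt_q_less_l: "t \<le> tstar \<Longrightarrow> sqrt (q t) < l t"
  using l_ge[of t] k2_less_k1 real_sqrt_less_mono[of "q t" "(l t)\<^sup>2"]
  unfolding q_eq_diff_squares by simp

text \<open>Adding the two prescribed values gives exp (2 xi) = cosh (2 xi) + sinh (2 xi) = (l - sqrt q) / (a - 2).\<close>
definition xi :: "real \<Rightarrow> real" where
  "xi t = ln ((l t - sqrt (q t)) / (a - 2)) / 2"

lemma exp_2_xi: "t \<le> tstar \<Longrightarrow> exp (2 * xi t) = (l t - sqrt (q t)) / (a - 2)"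
  unfolding xi_def using sqrt_q_less_l a_gt_2 by simp

lemma a_sq_minus_4_factor: "a\<^sup>2 - 4 = (a - 2) * (a + 2)"
  by (simp add: algebra_simps power2_eq_square)

lemma exp_minus_2_xi: "t \<le> tstar \<Longrightarrow> exp (- (2 * xi t)) = (l t + sqrt (q t)) / (a + 2)"
proof -
  assume t: "t \<le> tstar"
  have "(l t - sqrt (q t)) * (l t + sqrt (q t)) = (a - 2) * (a + 2)"
    using q_nonneg[OF t] q_eq_diff_squares[of t] a_sq_minus_4 a_sq_minus_4_factor
    by (simp add: algebra_simps power2_eq_square)
  then show ?thesis
    unfolding exp_minus exp_2_xi[OF t] using sqrt_q_less_l[OF t] a_gt_2
    by (simp add: field_simps)
qed

lemma cosh_sinh_2_xi:
  assumes "t \<le> tstar"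
  shows "cosh (2 * xi t) = (a * l t - 2 * sqrt (q t)) / (a\<^sup>2 - 4)"
    and "sinh (2 * xi t) = (2 * l t - a * sqrt (q t)) / (a\<^sup>2 - 4)"
proof -
  have "a - 2 \<noteq> 0" "a + 2 \<noteq> 0" "a * a - 4 \<noteq> 0" "a * (a * 2) - 8 \<noteq> 0"
    using a_gt_2 a_sq_minus_4 k2_less_k1 by (auto simp: power2_eq_square)
  then show "cosh (2 * xi t) = (a * l t - 2 * sqrt (q t)) / (a\<^sup>2 - 4)"
    and "sinh (2 * xi t) = (2 * l t - a * sqrt (q t)) / (a\<^sup>2 - 4)"
    unfolding cosh_field_def sinh_field_def exp_2_xi[OF assms] exp_minus_2_xi[OF assms] a_sq_minus_4_factor
    by (simp_all add: field_simps)
qed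

lemma xi_unique:
  assumes "t \<le> tstar"
    and "cosh (2 * y) = (a * l t - 2 * sqrt (q t)) / (a\<^sup>2 - 4)"
    and "sinh (2 * y) = (2 * l t - a * sqrt (q t)) / (a\<^sup>2 - 4)"
  shows "y = xi t"
proof -
  have "exp (2 * y) = cosh (2 * y) + sinh (2 * y)"
    by (simp add: cosh_plus_sinh)
  also have "\<dots> = (a + 2) * (l t - sqrt (q t)) / ((a - 2) * (a + 2))"
    unfolding assms(2,3) a_sq_minus_4_factor by (simp add: add_divide_distrib[symmetric] algebra_simps)
  also have "\<dots> = exp (2 * xi t)"
    unfolding exp_2_xi[OF assms(1)] using a_gt_2 by simp
  finally show ?thesis
    by simp
qed

lemma xi_0: "xi 0 = 0"
proof -
  have "sqrt (q 0) = 2"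
    unfolding q_eq l_0 by simp
  then show ?thesis
    unfolding xi_def l_0 using a_gt_2 by simp
qed

lemma has_real_derivative_xi:
  assumes t: "t < tstar"
  shows "(xi has_real_derivative real n * (l t - b) / sqrt (q t)) (at t)"
proof -
  define l' where "l' = - 2 * real n * (l t - b)"
  have l': "(l has_real_derivative l') (at t)"
    unfolding l_eq l'_def by (auto intro!: derivative_eq_intros simp: algebra_simps)
  have q': "(q has_real_derivative 2 * l t * l') (at t)"
    unfolding q_eq using l' by (auto intro!: derivative_eq_intros)
  have sqrt_q': "((\<lambda>t. sqrt (q t)) has_real_derivative l t * l' / sqrt (q t)) (at t)"
    using DERIV_chain2[OF DERIV_real_sqrt[OF q_pos[OF t]] q'] by (simp add: field_simps)
  have "((\<lambda>t. ln ((l t - sqrt (q t)) / (a - 2)) / 2) has_real_derivative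
      inverse ((l t - sqrt (q t)) / (a - 2)) * ((l' - l t * l' / sqrt (q t)) / (a - 2)) / 2) (at t)"
    using sqrt_q_less_l[of t] t a_gt_2
    by (intro DERIV_cdivide DERIV_chain2[OF DERIV_ln] DERIV_diff l' sqrt_q') simp_all
  moreover have "inverse ((l t - sqrt (q t)) / (a - 2)) * ((l' - l t * l' / sqrt (q t)) / (a - 2)) / 2
      = real n * (l t - b) / sqrt (q t)"
  proof -
    have "l t - sqrt (q t) \<noteq> 0" "sqrt (q t) \<noteq> 0" "a - 2 \<noteq> 0"
      using q_pos[OF t] sqrt_q_less_l[of t] t a_gt_2 by auto
    moreover have "l' - l t * l' / sqrt (q t) = - l' * (l t - sqrt (q t)) / sqrt (q t)"
      using \<open>sqrt (q t) \<noteq> 0\<close> by (simp add: field_simps)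
    ultimately show ?thesis
      by (simp add: l'_def)
  qed
  ultimately show ?thesis
    unfolding xi_def[abs_def] by simp
qed

lemma reciprocal_curvature:
  assumes "k = k1 \<or> k = k2"
  shows "k > 0" and "1 / k = a - k" and "(k - 1 / k)\<^sup>2 = (k1 - k2)\<^sup>2"
proof -
  show "k > 0"
    using assms k1_gt_1 k2_eq by auto
  then show "1 / k = a - k"
    using assms k1_k2 k2_eq unfolding a_eq by (auto simp: field_simps)
  then show "(k - 1 / k)\<^sup>2 = (k1 - k2)\<^sup>2"
    using assms unfolding a_eq by (auto simp: power2_commute)
qed

text \<open>On the parallel hypersurface at distance xi t the curvatures are (l t + k - 1/k) / sqrt (q t);
  this is the algebraic heart of the proof, and it degenerates at tstar where q vanishes.\<close>
lemma cosh_sub_mult_sinh_xi: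
  assumes k: "k = k1 \<or> k = k2" and t: "t \<le> tstar"
  shows "(cosh (xi t) - k * sinh (xi t)) * (l t + (k - 1 / k)) = (k * cosh (xi t) - sinh (xi t)) * sqrt (q t)"
proof -
  have "k > 0" "1 / k = a - k"
    using reciprocal_curvature[OF k] by simp_all
  then have k_a: "k * (a - 2) = (k - 1)\<^sup>2"
    by (simp add: field_simps power2_eq_square)
  have "k \<noteq> 1"
    using k k1_gt_1 k2_eq by auto
  moreover have "exp (2 * xi t) * (k - 1)\<^sup>2 = k * (l t - sqrt (q t))"
    unfolding exp_2_xi[OF t] k_a[symmetric] using a_gt_2 by simp
  moreover have "k * (k - 1 / k) = k\<^sup>2 - 1"
    using \<open>k > 0\<close> by (simp add: field_simps power2_eq_square)
  moreover have "(sqrt (q t))\<^sup>2 = (l t)\<^sup>2 - (k - 1 / k)\<^sup>2"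
    using q_nonneg[OF t] q_eq_diff_squares reciprocal_curvature(3)[OF k] by simp
  ultimately have identity: "((1 - k) * exp (2 * xi t) + (1 + k)) * (l t + (k - 1 / k)) =
      ((k - 1) * exp (2 * xi t) + (k + 1)) * sqrt (q t)"
    by (rule exp_form_curvature_identity)
  have "cosh (xi t) - k * sinh (xi t) = ((1 - k) * exp (2 * xi t) + (1 + k)) / (2 * exp (xi t))"
    using cosh_sinh_combination_exp[where a = 1 and b = k and y = "xi t"] by simp
  moreover have "k * cosh (xi t) - sinh (xi t) = ((k - 1) * exp (2 * xi t) + (k + 1)) / (2 * exp (xi t))"
    using cosh_sinh_combination_exp[where a = k and b = 1 and y = "xi t"] by simp
  ultimately show ?thesis
    by (simp only: times_divide_eq_left identity)
qed

lemma xi_tstar_focal: "cosh (xi tstar) - k1 * sinh (xi tstar) = 0"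
proof -
  have "(cosh (xi tstar) - k1 * sinh (xi tstar)) * (2 * (k1 - k2)) = 0"
    using cosh_sub_mult_sinh_xi[of k1 tstar] q_tstar l_tstar k2_eq by simp
  then show ?thesis
    using k2_less_k1 by simp
qed

lemma parallel_curvature_xi:
  assumes k: "k = k1 \<or> k = k2" and t: "t < tstar"
  shows "cosh (xi t) - k * sinh (xi t) \<noteq> 0"
    and "parallel_curvature k (xi t) = (l t + (k - 1 / k)) / sqrt (q t)"
proof -
  have identity: "(cosh (xi t) - k * sinh (xi t)) * (l t + (k - 1 / k)) =
      (k * cosh (xi t) - sinh (xi t)) * sqrt (q t)"
    using cosh_sub_mult_sinh_xi[OF k] t by simp
  have sqrt_q: "sqrt (q t) > 0"
    using q_pos[OF t] by simp
  show nonzero: "cosh (xi t) - k * sinh (xi t) \<noteq> 0"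
  proof
    assume focal: "cosh (xi t) - k * sinh (xi t) = 0"
    then have "k * cosh (xi t) - sinh (xi t) = 0"
      using identity sqrt_q by simp
    then show False
      using cosh_sub_mult_sinh_wronskian[of "xi t" k] focal by (simp only: mult_zero_right add_0)
  qed
  show "parallel_curvature k (xi t) = (l t + (k - 1 / k)) / sqrt (q t)"
    unfolding parallel_curvature_def frac_eq_eq[OF nonzero less_imp_neq[OF sqrt_q, symmetric]]
    using identity by (metis mult.commute)
qed

lemma has_real_derivative_xi_mean_curvature:
  assumes t: "t < tstar"
  shows "(xi has_real_derivative
    real m1 * parallel_curvature k1 (xi t) + real m2 * parallel_curvature k2 (xi t)) (at t)"
proof -
  have "1 / k1 = k2" "1 / k2 = k1"
    using reciprocal_curvature(2)[of k1] reciprocal_curvature(2)[of k2] a_eq by simp_all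
  then have K1: "parallel_curvature k1 (xi t) = (l t + (k1 - k2)) / sqrt (q t)"
    and K2: "parallel_curvature k2 (xi t) = (l t + (k2 - k1)) / sqrt (q t)"
    using parallel_curvature_xi(2)[OF _ t, of k1] parallel_curvature_xi(2)[OF _ t, of k2] by simp_all
  have "sqrt (q t) \<noteq> 0"
    using q_pos[OF t] by simp
  then have "sqrt (q t) * (real m1 * parallel_curvature k1 (xi t) + real m2 * parallel_curvature k2 (xi t)) =
      real m1 * (l t + (k1 - k2)) + real m2 * (l t + (k2 - k1))"
    unfolding K1 K2 by (simp add: field_simps)
  also have "\<dots> = real n * l t - real n * b"
    unfolding n_mult_b by (simp add: n_eq algebra_simps)
  finally have "real m1 * parallel_curvature k1 (xi t) + real m2 * parallel_curvature k2 (xi t) =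
      real n * (l t - b) / sqrt (q t)"
    using \<open>sqrt (q t) \<noteq> 0\<close> by (simp add: field_simps)
  then show ?thesis
    using has_real_derivative_xi[OF t] by simp
qed

end

theorem proposition4:
  fixes U :: "'m::euclidean_space set" and F N :: "'m \<Rightarrow> real \<times> 'v::euclidean_space"
    and m1 m2 n :: nat and \<kappa>1 \<kappa>2 :: real
  assumes "n = m1 + m2" and "m1 \<ge> 1" and "m2 \<ge> 1"
    and "DIM('m) = n" and "DIM('v) = n + 1"
    and "immersion_H U F" and "unit_normal U F N"
    and "\<kappa>1 > 1" and "\<kappa>1 * \<kappa>2 = 1"
    and "\<forall>p\<in>U. dim (princ_eigenspace F N p \<kappa>1) = m1 \<and> dim (princ_eigenspace F N p \<kappa>2) = m2"
  defines "a \<equiv> \<kappa>1 + \<kappa>2"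
    and "b \<equiv> - (real m1 - real m2) / real n * (\<kappa>1 - \<kappa>2)"
  defines "l \<equiv> \<lambda>t::real. (a - b) * exp (- 2 * real n * t) + b"
  defines "q \<equiv> \<lambda>t::real. (l t)\<^sup>2 - a\<^sup>2 + 4"
    and "tstar \<equiv> 1 / (2 * real n) * ln ((real m1 * \<kappa>1\<^sup>2 + real m2) / (real m1 * (\<kappa>1\<^sup>2 - 1)))"
  shows "(\<exists>\<xi>::real \<Rightarrow> real. \<forall>t\<le>tstar.
            cosh (2 * \<xi> t) = (a * l t - 2 * sqrt (q t)) / (a\<^sup>2 - 4) \<and>
            sinh (2 * \<xi> t) = (2 * l t - a * sqrt (q t)) / (a\<^sup>2 - 4))
       \<and> (\<forall>\<xi>::real \<Rightarrow> real. (\<forall>t\<le>tstar.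
            cosh (2 * \<xi> t) = (a * l t - 2 * sqrt (q t)) / (a\<^sup>2 - 4) \<and>
            sinh (2 * \<xi> t) = (2 * l t - a * sqrt (q t)) / (a\<^sup>2 - 4)) \<longrightarrow>
          mcf_solution U {..<tstar} (\<lambda>x t. cosh (\<xi> t) *\<^sub>R F x + sinh (\<xi> t) *\<^sub>R N x) F
          \<and> (\<forall>x\<in>U. (\<lambda>y. cosh (\<xi> tstar) *\<^sub>R F y + sinh (\<xi> tstar) *\<^sub>R N y) differentiable (at x)
                 \<and> dim (range (frechet_derivative
                      (\<lambda>y. cosh (\<xi> tstar) *\<^sub>R F y + sinh (\<xi> tstar) *\<^sub>R N y) (at x))) = m2))"
proof -
  interpret flow: cylinder_flow_data m1 m2 n \<kappa>1 \<kappa>2 a b tstar l q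
    by unfold_locales (use assms in auto)
  interpret cylinder: two_curvature_hypersurface U F N \<kappa>1 \<kappa>2 m1 m2
    by unfold_locales (use assms flow.k2_less_k1 in auto)
  show ?thesis
  proof (intro conjI allI impI)
    show "\<exists>\<xi>::real \<Rightarrow> real. \<forall>t\<le>tstar.
        cosh (2 * \<xi> t) = (a * l t - 2 * sqrt (q t)) / (a\<^sup>2 - 4) \<and>
        sinh (2 * \<xi> t) = (2 * l t - a * sqrt (q t)) / (a\<^sup>2 - 4)"
      using flow.cosh_sinh_2_xi by blast
    fix \<xi> :: "real \<Rightarrow> real"
    assume "\<forall>t\<le>tstar. cosh (2 * \<xi> t) = (a * l t - 2 * sqrt (q t)) / (a\<^sup>2 - 4) \<and>
        sinh (2 * \<xi> t) = (2 * l t - a * sqrt (q t)) / (a\<^sup>2 - 4)"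
    then have \<xi>: "\<xi> t = flow.xi t" if "t \<le> tstar" for t
      using flow.xi_unique[OF that] that by blast
    show "mcf_solution U {..<tstar} (\<lambda>x t. cosh (\<xi> t) *\<^sub>R F x + sinh (\<xi> t) *\<^sub>R N x) F"
    proof (rule cylinder.mcf_solution_parallel_flow)
      show "0 \<in> {..<tstar}" and "\<xi> 0 = 0"
        using \<xi>[of 0] flow.xi_0 flow.tstar_pos by simp_all
      fix t assume "t \<in> {..<tstar}"
      then have t: "t < tstar"
        by simp
      show "cosh (\<xi> t) - \<kappa>1 * sinh (\<xi> t) \<noteq> 0 \<and> cosh (\<xi> t) - \<kappa>2 * sinh (\<xi> t) \<noteq> 0"
        using flow.parallel_curvature_xi(1)[OF _ t] \<xi>[of t] t by auto
      have "(\<xi> has_real_derivative real m1 * parallel_curvature \<kappa>1 (flow.xi t)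
          + real m2 * parallel_curvature \<kappa>2 (flow.xi t)) (at t)"
        by (rule has_field_derivative_transform_within_open[OF
            flow.has_real_derivative_xi_mean_curvature[OF t] open_lessThan, where g = \<xi>])
           (use t \<xi> in auto)
      then have "(\<xi> has_real_derivative real m1 * parallel_curvature \<kappa>1 (\<xi> t)
          + real m2 * parallel_curvature \<kappa>2 (\<xi> t)) (at t)"
        using \<xi>[of t] t by simp
      then show "(\<xi> has_real_derivative real m1 * parallel_curvature \<kappa>1 (\<xi> t)
          + real m2 * parallel_curvature \<kappa>2 (\<xi> t)) (at t within {..<tstar})"
        by (rule has_field_derivative_at_within)
    qed
    show "\<forall>x\<in>U. (\<lambda>y. cosh (\<xi> tstar) *\<^sub>R F y + sinh (\<xi> tstar) *\<^sub>R N y) differentiable (at x)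
        \<and> dim (range (frechet_derivative
            (\<lambda>y. cosh (\<xi> tstar) *\<^sub>R F y + sinh (\<xi> tstar) *\<^sub>R N y) (at x))) = m2"
    proof
      fix x assume x: "x \<in> U"
      have "cosh (\<xi> tstar) - \<kappa>1 * sinh (\<xi> tstar) = 0"
        using flow.xi_tstar_focal \<xi>[of tstar] by simp
      then show "(\<lambda>y. cosh (\<xi> tstar) *\<^sub>R F y + sinh (\<xi> tstar) *\<^sub>R N y) differentiable (at x)
          \<and> dim (range (frechet_derivative
              (\<lambda>y. cosh (\<xi> tstar) *\<^sub>R F y + sinh (\<xi> tstar) *\<^sub>R N y) (at x))) = m2"
        by (intro conjI differentiableI[OF cylinder.has_derivative_parallel[OF x]]
            cylinder.dim_range_frechet_derivative_parallel_focal[OF _ x])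
    qed
  qed
qed

end
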